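(* Let $f:\mathbb B\to\mathbb B$ be slice regular with $f(\mathbb B_I)\subseteq\mathbb B_I$ for some $I\in\mathbb S$. Then for every $n\in\mathbb N$ the $n$-fold regular composition $f^{\odot n}$ (defined by $f^{\odot1}=f$, $f^{\odot(n+1)}=f^{\odot}(f^{\odot n})$) is well defined as a regular self-mapping of $\mathbb B$, and $$f^{\odot n}=\mathrm{ext}\big((f_I)^n\big),$$ where $(f_I)^n=f_I\circ\cdots\circ f_I$ is the $n$-th ordinary iterate of the holomorphic self-map $f_I=f|_{\mathbb B_I}$ of $\mathbb B_I$.
   Context: $\mathbb H$ quaternions, $\mathbb S=\{q:q^2=-1\}$, $\mathbb C_I=\mathbb R+I\mathbb R$, $\mathbb B$ open unit ball, $\mathbb B_I=\mathbb B\cap\mathbb C_I$. A function on a domain $\Omega$ is slice regular if on each $\Omega_I=\Omega\cap\mathbb C_I$ it is $C^1$ and annihilated by $\frac12(\partial_x+I\partial_y)$; regular functions on $\mathbb B$ are convergent power series $\sum_nq^na_n$. $\ast$-product: $\big(\sum q^na_n\big)\ast\big(\sum q^nb_n\big)=\sum_nq^n\sum_ka_kb_{n-k}$, $\varphi^{\ast0}=1$, $\varphi^{\ast n}=\varphi\ast\varphi^{\ast(n-1)}$. Regular composition: $g^{\odot}\varphi=\sum_n\varphi^{\ast n}a_n$ for $g=\sum q^na_n$. Regular extension: for $h:\mathbb B_I\to\mathbb H$ with $\frac12(\partial_x+I\partial_y)h=0$, $\mathrm{ext}(h)(x+yJ)=\frac12\big(h(x+yI)+h(x-yI)\big)+\frac12JI\big(h(x-yI)-h(x+yI)\big)$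 for $J\in\mathbb S$; it is the unique regular function on $\mathbb B$ extending $h$. *)

theory Defs
  imports "HOL-Analysis.Analysis"
begin

text \<open>A quaternion z + w j (z, w complex, i.e. a + b i + c j + d k with z = a + b i,
  w = c + d i) is represented by the pair (z, w). Addition, real scaling, the norm
  (Euclidean norm on R^4) and the topology are those of the product type
  complex * complex; only the quaternion multiplication is defined separately.\<close>

type_synonym quat = "complex \<times> complex"

definition qmul :: "quat \<Rightarrow> quat \<Rightarrow> quat" where
  "qmul p q = (fst p * fst q - snd p * cnj (snd q), fst p * snd q + snd p * cnj (fst q))"

definition qone :: quat where "qone = (1, 0)"

primrec qpow :: "quat \<Rightarrow> nat \<Rightarrow> quat" where
  "qpow q 0 = qone"
| "qpow q (Suc n) = qmul q (qpow q n)"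

definition qreal :: "real \<Rightarrow> quat" where "qreal x = (complex_of_real x, 0)"

definition qre :: "quat \<Rightarrow> real" where "qre q = Re (fst q)"

definition qim :: "quat \<Rightarrow> quat" where "qim q = q - qreal (qre q)"

definition qsphere :: "quat set" where "qsphere = {q. qmul q q = - qone}"

definition slice :: "real \<Rightarrow> real \<Rightarrow> quat \<Rightarrow> quat" where
  "slice x y I = qreal x + y *\<^sub>R I"

definition qball :: "quat set" where "qball = {q. norm q < 1}"

definition qballI :: "quat \<Rightarrow> quat set" where
  "qballI I = {q \<in> qball. \<exists>x y. q = slice x y I}"

definition slice_regular :: "quat set \<Rightarrow> (quat \<Rightarrow> quat) \<Rightarrow> bool" where
  "slice_regular \<Omega> f \<longleftrightarrow>
     (\<forall>I\<in>qsphere.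
        \<exists>D :: real \<times> real \<Rightarrow> real \<times> real \<Rightarrow> quat.
          (\<forall>p\<in>{(x, y). slice x y I \<in> \<Omega>}.
              ((\<lambda>(x, y). f (slice x y I)) has_derivative D p) (at p)) \<and>
          continuous_on {(x, y). slice x y I \<in> \<Omega>} (\<lambda>p. D p (1, 0)) \<and>
          continuous_on {(x, y). slice x y I \<in> \<Omega>} (\<lambda>p. D p (0, 1)) \<and>
          (\<forall>p\<in>{(x, y). slice x y I \<in> \<Omega>}. D p (1, 0) + qmul I (D p (0, 1)) = 0))"

definition pseries :: "(nat \<Rightarrow> quat) \<Rightarrow> quat \<Rightarrow> quat" where
  "pseries a q = (\<Sum>n. qmul (qpow q n) (a n))"

definition qcoeffs :: "(quat \<Rightarrow> quat) \<Rightarrow> nat \<Rightarrow> quat" where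
  "qcoeffs f = (SOME a. \<forall>q\<in>qball. (\<lambda>n. qmul (qpow q n) (a n)) sums f q)"

definition star_coeffs :: "(nat \<Rightarrow> quat) \<Rightarrow> (nat \<Rightarrow> quat) \<Rightarrow> nat \<Rightarrow> quat" where
  "star_coeffs a b n = (\<Sum>k\<le>n. qmul (a k) (b (n - k)))"

primrec star_pow_coeffs :: "(nat \<Rightarrow> quat) \<Rightarrow> nat \<Rightarrow> nat \<Rightarrow> quat" where
  "star_pow_coeffs a 0 = (\<lambda>m. if m = 0 then qone else 0)"
| "star_pow_coeffs a (Suc n) = star_coeffs a (star_pow_coeffs a n)"

definition star_pow :: "(quat \<Rightarrow> quat) \<Rightarrow> nat \<Rightarrow> quat \<Rightarrow> quat" where
  "star_pow \<phi> n = pseries (star_pow_coeffs (qcoeffs \<phi>) n)"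

definition reg_comp :: "(quat \<Rightarrow> quat) \<Rightarrow> (quat \<Rightarrow> quat) \<Rightarrow> quat \<Rightarrow> quat" where
  "reg_comp g \<phi> = (\<lambda>q. \<Sum>n. qmul (star_pow \<phi> n q) (qcoeffs g n))"

text \<open>n-fold regular composition for n \<ge> 1: f^{\<odot>1} = f, f^{\<odot>(n+1)} = f^{\<odot>}(f^{\<odot>n}).
  (The value at n = 0 is an irrelevant placeholder.)\<close>
primrec reg_iter :: "(quat \<Rightarrow> quat) \<Rightarrow> nat \<Rightarrow> quat \<Rightarrow> quat" where
  "reg_iter f 0 = (\<lambda>q. q)"
| "reg_iter f (Suc n) = (if n = 0 then f else reg_comp f (reg_iter f n))"

text \<open>ext(h)(x + yJ) = 1/2 (h(x+yI) + h(x-yI)) + 1/2 J I (h(x-yI) - h(x+yI)),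
  with x = Re q, y = |Im q|, J = Im q / |Im q| (J = I when q is real; then y = 0
  and the choice of J is irrelevant).\<close>
definition regext :: "quat \<Rightarrow> (quat \<Rightarrow> quat) \<Rightarrow> quat \<Rightarrow> quat" where
  "regext I h q =
     (let x = qre q; y = norm (qim q);
          J = (if y = 0 then I else (1 / y) *\<^sub>R qim q)
      in (1/2) *\<^sub>R (h (slice x y I) + h (slice x (- y) I))
         + (1/2) *\<^sub>R qmul (qmul J I) (h (slice x (- y) I) - h (slice x y I)))"

end

theory Submission
  imports Defs "HOL-Complex_Analysis.Complex_Analysis"
begin

(* Let h = f restricted to the slice C_I, read as a map of the complex unit disc.
   Because f preserves B_I, h is a holomorphic self-map of the disc, and so are its iterates
   h^n; let F_n be the Taylor series of h^n at 0.  For a complex power series F of radius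
   at least 1 write  slice_series I F  for the quaternionic series sum_k q^k F_k whose
   coefficients lie in C_I.  On every slice C_J such a series is given by the representation
   formula  rep_formula I J (F z) (F (cnj z)), which shows at once that it is slice regular,
   maps B into B when F maps the disc into itself, and coincides with ext(h) whenever h
   is its restriction to C_I.  Since C_I is closed under multiplication, *-powers of
   slice_series I G are slice_series I (G^k), so the regular composition of two such series
   is the series of the composed complex functions.  By the identity principle f itself is
   slice_series I F_1, and induction gives f^(odot n) = slice_series I F_n, from which all
   four claims of the theorem follow. *)

section \<open>Quaternion arithmetic\<close>

lemma qmul_assoc: "qmul (qmul p q) r = qmul p (qmul q r)"
  by (cases p; cases q; cases r) (simp add: qmul_def algebra_simps)

lemma qmul_add_left: "qmul (p + q) r = qmul p r + qmul q r"
  by (cases p; cases q; cases r) (simp add: qmul_def algebra_simps)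

lemma qmul_add_right: "qmul r (p + q) = qmul r p + qmul r q"
  by (cases p; cases q; cases r) (simp add: qmul_def algebra_simps)

lemma qmul_scaleR_left: "qmul (c *\<^sub>R p) r = c *\<^sub>R qmul p r"
  by (cases p; cases r) (simp add: qmul_def algebra_simps scaleR_conv_of_real)

lemma qmul_scaleR_right: "qmul r (c *\<^sub>R p) = c *\<^sub>R qmul r p"
  by (cases p; cases r) (simp add: qmul_def algebra_simps scaleR_conv_of_real)

lemma qmul_minus_left: "qmul (- p) r = - qmul p r"
  by (cases p; cases r) (simp add: qmul_def algebra_simps)

lemma qmul_minus_right: "qmul r (- p) = - qmul r p"
  by (cases p; cases r) (simp add: qmul_def algebra_simps)

lemma qmul_zero_right [simp]: "qmul p 0 = 0"
  by (simp add: qmul_def zero_prod_def)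

lemma qmul_qone_left [simp]: "qmul qone p = p"
  by (cases p) (simp add: qmul_def qone_def)

lemma qmul_qone_right [simp]: "qmul p qone = p"
  by (cases p) (simp add: qmul_def qone_def)

lemma qmul_qreal_left: "qmul (qreal x) p = x *\<^sub>R p"
  by (cases p) (simp add: qmul_def qreal_def scaleR_conv_of_real)

lemma qreal_eq: "qreal x = x *\<^sub>R qone"
  by (simp add: qreal_def qone_def scaleR_conv_of_real)

lemma qpow_qreal: "qpow (qreal x) k = qreal (x ^ k)"
  by (induction k) (simp_all add: qone_def qreal_def qmul_def)

lemma bounded_linear_qmul_right: "bounded_linear (qmul J)"
proof -
  have "linear (qmul J)"
    by (rule linearI) (simp_all add: qmul_add_right qmul_scaleR_right)
  then show ?thesis using linear_conv_bounded_linear by blast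
qed

lemma norm_qmul: "norm (qmul p q) = norm p * norm q"
proof -
  obtain a b where p: "p = (a, b)" by (cases p)
  obtain c d where q: "q = (c, d)" by (cases q)
  obtain a1 a2 where a: "a = Complex a1 a2" by (cases a)
  obtain b1 b2 where b: "b = Complex b1 b2" by (cases b)
  obtain c1 c2 where c: "c = Complex c1 c2" by (cases c)
  obtain d1 d2 where d: "d = Complex d1 d2" by (cases d)
  have "(norm (qmul p q))^2 = (norm p * norm q)^2"
    by (simp add: p q a b c d qmul_def norm_Pair cmod_power2 power_mult_distrib)
       (simp add: power2_eq_square algebra_simps)
  then show ?thesis by (simp add: power2_eq_iff_nonneg)
qed

lemma qsphere_iff: "I \<in> qsphere \<longleftrightarrow> Re (fst I) = 0 \<and> (cmod (fst I))\<^sup>2 + (cmod (snd I))\<^sup>2 = 1"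
proof (cases I)
  case (Pair a b)
  obtain a1 a2 where a: "a = Complex a1 a2" by (cases a)
  obtain b1 b2 where b: "b = Complex b1 b2" by (cases b)
  have "I \<in> qsphere \<longleftrightarrow> a1*a1 - a2*a2 - (b1*b1+b2*b2) = -1 \<and> 2*a1*a2 = 0 \<and> 2*a1*b1 = 0 \<and> 2*a1*b2 = 0"
    by (simp add: qsphere_def qmul_def qone_def Pair a b complex_eq_iff algebra_simps) blast
  also have "\<dots> \<longleftrightarrow> a1 = 0 \<and> a2*a2 + b1*b1 + b2*b2 = 1"
    apply (auto simp: algebra_simps)
    by (metis add_pos_nonneg zero_le_square zero_less_one less_irrefl)+
  finally show ?thesis by (auto simp: Pair a b cmod_power2 power2_eq_square[symmetric] add.assoc)
qed

lemma qsphere_sq2: "J \<in> qsphere \<Longrightarrow> qmul J (qmul J q) = - q"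
  by (simp add: qmul_assoc[symmetric] qsphere_def qmul_minus_left)

lemma quat_eq_by_functionals:
  fixes p q :: quat
  assumes "\<And>l::quat \<Rightarrow> real. bounded_linear l \<Longrightarrow> l p = l q"
  shows "p = q"
proof -
  have "bounded_linear (\<lambda>q::quat. Re (fst q))" "bounded_linear (\<lambda>q::quat. Im (fst q))"
    "bounded_linear (\<lambda>q::quat. Re (snd q))" "bounded_linear (\<lambda>q::quat. Im (snd q))"
    by (intro bounded_linear_compose[OF bounded_linear_Re] bounded_linear_compose[OF bounded_linear_Im]
        bounded_linear_fst bounded_linear_snd)+
  from this[THEN assms] show ?thesis by (simp add: prod_eq_iff complex_eq_iff)
qed

section \<open>The slices \<open>C_J\<close> as copies of the complex plane\<close>

definition sl :: "quat \<Rightarrow> complex \<Rightarrow> quat" where "sl J z = slice (Re z) (Im z) J"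

lemma slice_sl: "slice x y J = sl J (Complex x y)"
  by (simp add: sl_def)

lemma sl_eq: "sl J z = Re z *\<^sub>R qone + Im z *\<^sub>R J"
  by (simp add: sl_def slice_def qreal_eq)

lemma sl_add: "sl J (u + v) = sl J u + sl J v"
  by (simp add: sl_eq algebra_simps)

lemma sl_diff: "sl J (u - v) = sl J u - sl J v"
  by (simp add: sl_eq algebra_simps)

lemma sl_scale: "sl J (complex_of_real r * u) = r *\<^sub>R sl J u"
  by (simp add: sl_eq algebra_simps)

lemma sl_of_real [simp]: "sl J (complex_of_real x) = qreal x"
  by (simp add: sl_eq qreal_eq)

lemma bounded_linear_sl: "bounded_linear (sl J)"
  unfolding sl_eq
  by (intro bounded_linear_add bounded_linear_compose[OF bounded_linear_scaleR_left bounded_linear_Re]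
     bounded_linear_compose[OF bounded_linear_scaleR_left bounded_linear_Im])

lemma sl_zero [simp]: "sl J 0 = 0"
  by (simp add: sl_eq)

lemma sl_one [simp]: "sl J 1 = qone"
  by (simp add: sl_eq)

lemma sl_sum: "sl J (sum f A) = (\<Sum>a\<in>A. sl J (f a))"
  using linear_sum[OF bounded_linear.linear[OF bounded_linear_sl]] .

lemma sl_mult: "J \<in> qsphere \<Longrightarrow> qmul (sl J u) (sl J v) = sl J (u * v)"
  by (simp add: sl_eq qmul_add_left qmul_add_right qmul_scaleR_left qmul_scaleR_right
        qsphere_def algebra_simps)

lemma sl_pow: "J \<in> qsphere \<Longrightarrow> qpow (sl J z) k = sl J (z ^ k)"
  by (induction k) (simp_all add: sl_mult)

lemma qmul_J_sl: "J \<in> qsphere \<Longrightarrow> qmul J (sl J w) = sl J (\<i> * w)"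
  using sl_mult[of J \<i> w] by (simp add: sl_eq)

lemma qre_sl: "J \<in> qsphere \<Longrightarrow> qre (sl J z) = Re z"
  by (simp add: sl_eq qre_def qone_def qsphere_iff)

lemma norm_sl: "J \<in> qsphere \<Longrightarrow> norm (sl J z) = cmod z"
proof -
  assume J: "J \<in> qsphere"
  obtain a b where Jab: "J = (a, b)" by (cases J)
  obtain a1 a2 where a: "a = Complex a1 a2" by (cases a)
  obtain b1 b2 where b: "b = Complex b1 b2" by (cases b)
  obtain z1 z2 where z: "z = Complex z1 z2" by (cases z)
  from J have a1: "a1 = 0" and n: "a2^2 + b1^2 + b2^2 = 1"
    by (auto simp: qsphere_iff Jab a b cmod_power2 add.assoc)
  have "(norm (sl J z))^2 = (cmod z)^2"
    by (simp add: sl_eq Jab a b z qone_def norm_Pair cmod_power2 a1 power_mult_distrib)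
       (use arg_cong[OF n, of "\<lambda>t. t * z2^2"] in \<open>simp add: algebra_simps power2_eq_square\<close>)
  then show ?thesis by (simp add: power2_eq_iff_nonneg)
qed

lemma norm_sphere: "J \<in> qsphere \<Longrightarrow> norm J = 1"
  using norm_sl[of J \<i>] by (simp add: sl_eq)

lemma ball_sl_iff: "J \<in> qsphere \<Longrightarrow> sl J z \<in> qball \<longleftrightarrow> cmod z < 1"
  by (simp add: qball_def norm_sl)

definition slice_coord :: "quat \<Rightarrow> quat \<Rightarrow> complex" where
  "slice_coord I p = Complex (qre p) (- qre (qmul I p))"

lemma slice_coord_sl: "I \<in> qsphere \<Longrightarrow> slice_coord I (sl I w) = w"
  by (simp add: slice_coord_def qmul_J_sl qre_sl complex_eq_iff)

(* Every quaternion q lies on the slice through the imaginary unit slice_unit I q, at the point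
   slice_point q of the upper half plane; these are exactly the J, x, y used by regext. *)
definition slice_unit :: "quat \<Rightarrow> quat \<Rightarrow> quat" where
  "slice_unit I q = (if norm (qim q) = 0 then I else (1 / norm (qim q)) *\<^sub>R qim q)"

definition slice_point :: "quat \<Rightarrow> complex" where
  "slice_point q = Complex (qre q) (norm (qim q))"

lemma slice_decomposition:
  assumes I: "I \<in> qsphere"
  shows "slice_unit I q \<in> qsphere" "q = sl (slice_unit I q) (slice_point q)"
    "cmod (slice_point q) = norm q"
proof -
  obtain a b where q: "q = (a, b)" by (cases q)
  define y where "y = norm (qim q)"
  have qim: "qim q = (Complex 0 (Im a), b)" by (simp add: qim_def qreal_def qre_def q complex_eq_iff)
  have y2: "y^2 = (Im a)^2 + (cmod b)^2"
    by (simp add: y_def qim norm_Pair cmod_power2)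
  have qx: "q = qreal (qre q) + qim q" by (simp add: qim_def)
  show "slice_unit I q \<in> qsphere"
  proof (cases "y = 0")
    case True then show ?thesis by (simp add: slice_unit_def y_def I)
  next
    case False
    then have J: "slice_unit I q = (1 / y) *\<^sub>R (Complex 0 (Im a), b)"
      unfolding slice_unit_def y_def[symmetric] by (simp add: qim)
    have "(cmod (fst (slice_unit I q)))^2 + (cmod (snd (slice_unit I q)))^2
          = ((Im a)^2 + (cmod b)^2) / y^2"
      by (simp add: J cmod_power2 power_divide add_divide_distrib)
    also have "\<dots> = 1" using False by (simp add: y2[symmetric])
    finally show ?thesis by (simp add: qsphere_iff J)
  qed
  show "q = sl (slice_unit I q) (slice_point q)"
    using qx by (cases "y = 0") (simp_all add: sl_def slice_def slice_unit_def slice_point_def y_def)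
  have "(cmod (slice_point q))^2 = (norm q)^2"
    using y2 by (simp add: slice_point_def cmod_power2 y_def qre_def q norm_Pair)
  then show "cmod (slice_point q) = norm q" by (simp add: power2_eq_iff_nonneg)
qed

lemma qball_in_slice:
  assumes I: "I \<in> qsphere" and q: "q \<in> qball"
  obtains J z where "J \<in> qsphere" "cmod z < 1" "q = sl J z"
  using slice_decomposition[OF I, of q] q that[of "slice_unit I q" "slice_point q"]
  by (simp add: qball_def)

section \<open>The representation formula\<close>

(* rep_formula I J u v is the value on the slice C_J of the slice function whose values at
   z and cnj z on C_I are sl I u and sl I v:  (u+v)/2 + J (-i (u-v)/2), read in C_I. *)
definition rep_formula :: "quat \<Rightarrow> quat \<Rightarrow> complex \<Rightarrow> complex \<Rightarrow> quat" where
  "rep_formula I J u v = sl I ((u + v) / 2) + qmul J (sl I (- \<i> * (u - v) / 2))"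

lemma rep_formula_same:
  assumes I: "I \<in> qsphere"
  shows "rep_formula I I u v = sl I u"
proof -
  have "rep_formula I I u v = sl I ((u + v) / 2 + \<i> * (- \<i> * (u - v) / 2))"
    unfolding rep_formula_def qmul_J_sl[OF I] sl_add[symmetric] by (rule refl)
  also have "(u + v) / 2 + \<i> * (- \<i> * (u - v) / 2) = u"
    by (auto simp: complex_eq_iff field_simps)
  finally show ?thesis .
qed

(* The shape in which the formula appears in the definition of regext. *)
lemma rep_formula_alt:
  assumes I: "I \<in> qsphere"
  shows "rep_formula I J u v =
    (1/2) *\<^sub>R (sl I u + sl I v) + (1/2) *\<^sub>R qmul (qmul J I) (sl I v - sl I u)"
proof -
  have "(1/2) *\<^sub>R (sl I u + sl I v) = sl I (complex_of_real (1/2) * (u + v))"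
    by (simp only: sl_add[symmetric] sl_scale)
  moreover have "(1/2) *\<^sub>R qmul (qmul J I) (sl I v - sl I u) =
        qmul J (sl I (complex_of_real (1/2) * (\<i> * (v - u))))"
    by (simp only: sl_diff[symmetric] qmul_assoc qmul_J_sl[OF I] sl_scale qmul_scaleR_right)
  moreover have "complex_of_real (1/2) * (u + v) = (u + v) / 2"
    "complex_of_real (1/2) * (\<i> * (v - u)) = - \<i> * (u - v) / 2"
    by (simp_all add: field_simps)
  ultimately show ?thesis by (simp add: rep_formula_def)
qed

lemma regext_rep_formula:
  assumes I: "I \<in> qsphere" and q: "q \<in> qball"
    and G: "\<And>w. cmod w < 1 \<Longrightarrow> G (sl I w) = sl I (g w)"
  shows "regext I G q = rep_formula I (slice_unit I q) (g (slice_point q)) (g (cnj (slice_point q)))"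
proof -
  define z where "z = slice_point q"
  have z: "cmod z < 1" "cmod (cnj z) < 1"
    using q slice_decomposition(3)[OF I, of q] by (simp_all add: qball_def z_def)
  have "slice (qre q) (norm (qim q)) I = sl I z"
    "slice (qre q) (- norm (qim q)) I = sl I (cnj z)"
    by (simp_all add: slice_sl z_def slice_point_def complex_cnj)
  then show ?thesis
    unfolding regext_def Let_def slice_unit_def[symmetric] z_def[symmetric]
    by (simp only: G[OF z(1)] G[OF z(2)] rep_formula_alt[OF I])
qed

lemma sl_mult_rep_formula:
  assumes I: "I \<in> qsphere" and J: "J \<in> qsphere"
  shows "qmul (sl J w) (sl I c) = rep_formula I J (w * c) (cnj w * c)"
proof -
  have "(w * c + cnj w * c) / 2 = complex_of_real (Re w) * c"
    "- \<i> * (w * c - cnj w * c) / 2 = complex_of_real (Im w) * c"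
    by (simp_all add: complex_eq_iff algebra_simps)
  then show ?thesis
    by (simp add: rep_formula_def sl_scale sl_eq[of J w] qmul_add_left qmul_scaleR_left
        qmul_scaleR_right)
qed

lemma rep_formula_mult_sl:
  assumes I: "I \<in> qsphere"
  shows "qmul (rep_formula I J u v) (sl I a) = rep_formula I J (u * a) (v * a)"
  by (simp add: rep_formula_def qmul_add_left qmul_assoc sl_mult[OF I] algebra_simps)

lemma bounded_linear_rep_formula: "bounded_linear (\<lambda>p. rep_formula I J (fst p) (snd p))"
proof -
  have "linear (\<lambda>p::complex \<times> complex. (fst p + snd p) / 2)"
    "linear (\<lambda>p::complex \<times> complex. - \<i> * (fst p - snd p) / 2)"
    by (rule linearI; simp add: scaleR_conv_of_real field_simps)+
  then have "bounded_linear (\<lambda>p::complex \<times> complex. (fst p + snd p) / 2)"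
    "bounded_linear (\<lambda>p::complex \<times> complex. - \<i> * (fst p - snd p) / 2)"
    by (simp_all add: linear_conv_bounded_linear)
  from bounded_linear_compose[OF bounded_linear_sl this(1)]
    bounded_linear_compose[OF bounded_linear_compose[OF bounded_linear_qmul_right bounded_linear_sl] this(2)]
  show ?thesis unfolding rep_formula_def by (rule bounded_linear_add)
qed

lemma rep_formula_sums:
  assumes "u sums U" and "v sums V"
  shows "(\<lambda>n. rep_formula I J (u n) (v n)) sums rep_formula I J U V"
proof -
  have "(\<lambda>n. (u n + v n) / 2) sums ((U + V) / 2)"
    "(\<lambda>n. - \<i> * (u n - v n) / 2) sums (- \<i> * (U - V) / 2)"
    by (intro sums_divide sums_add sums_mult sums_diff assms)+
  then show ?thesis unfolding rep_formula_def
    by (intro sums_add bounded_linear.sums[OF bounded_linear_sl]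
        bounded_linear.sums[OF bounded_linear_compose[OF bounded_linear_qmul_right bounded_linear_sl]])
qed

(* The Cauchy-Riemann identity that makes the formula slice regular on C_J. *)
lemma rep_formula_CR:
  assumes J: "J \<in> qsphere"
  shows "rep_formula I J u v + qmul J (rep_formula I J (u * \<i>) (- (v * \<i>))) = 0"
proof -
  have "rep_formula I J u v + qmul J (rep_formula I J (u * \<i>) (- (v * \<i>))) =
     qmul J (sl I (- \<i> * (u - v) / 2 + (u * \<i> + - (v * \<i>)) / 2))
     + sl I ((u + v) / 2 - - \<i> * (u * \<i> - - (v * \<i>)) / 2)"
    by (simp add: rep_formula_def qmul_add_right qsphere_sq2[OF J] sl_add sl_diff algebra_simps)
  moreover have "- \<i> * (u - v) / 2 + (u * \<i> + - (v * \<i>)) / 2 = 0"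
    "(u + v) / 2 - - \<i> * (u * \<i> - - (v * \<i>)) / 2 = 0"
    by (simp_all add: field_simps)
  ultimately show ?thesis by (simp only: sl_zero qmul_zero_right add_0)
qed

lemma inner_sl_qmul_sl:
  assumes I: "I \<in> qsphere" and J: "J \<in> qsphere"
  shows "inner (sl I p) (qmul J (sl I q)) = inner I J * (Im p * Re q - Re p * Im q)"
proof -
  obtain a b where Iab: "I = (a, b)" by (cases I)
  obtain a1 a2 where a: "a = Complex a1 a2" by (cases a)
  obtain b1 b2 where b: "b = Complex b1 b2" by (cases b)
  obtain c d where Jcd: "J = (c, d)" by (cases J)
  obtain c1 c2 where c: "c = Complex c1 c2" by (cases c)
  obtain d1 d2 where d: "d = Complex d1 d2" by (cases d)
  obtain p1 p2 where pp: "p = Complex p1 p2" by (cases p)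
  obtain q1 q2 where qq: "q = Complex q1 q2" by (cases q)
  from I have a1: "a1 = 0" by (auto simp: qsphere_iff Iab a)
  from J have c1: "c1 = 0" by (auto simp: qsphere_iff Jcd c)
  show ?thesis
    by (simp add: Iab a b Jcd c d pp qq a1 c1 sl_eq qone_def qmul_def inner_complex_def)
       (simp add: algebra_simps)
qed

(* The formula maps pairs of points of the unit disc into the unit ball: writing
   P = (u+v)/2, Q = -i(u-v)/2, one has |rep|^2 = |P|^2 + |Q|^2 + 2<I,J>t while
   |u|^2, |v|^2 = |P|^2 + |Q|^2 +- 2t, and |<I,J>| <= 1. *)
lemma norm_rep_formula:
  assumes I: "I \<in> qsphere" and J: "J \<in> qsphere" and u: "cmod u < 1" and v: "cmod v < 1"
  shows "norm (rep_formula I J u v) < 1"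
proof -
  define P where "P = (u + v) / 2"
  define Q where "Q = - \<i> * (u - v) / 2"
  define t where "t = Im P * Re Q - Re P * Im Q"
  have RP: "Re P = (Re u + Re v) / 2" "Im P = (Im u + Im v) / 2"
    "Re Q = (Im u - Im v) / 2" "Im Q = (Re v - Re u) / 2"
    by (simp_all add: P_def Q_def field_simps)
  have hu: "(cmod u)^2 = (cmod P)^2 + (cmod Q)^2 + 2 * t"
    and hv: "(cmod v)^2 = (cmod P)^2 + (cmod Q)^2 - 2 * t"
    unfolding cmod_power2 t_def RP by (simp_all add: power2_eq_square field_simps)
  have "\<bar>inner I J\<bar> \<le> 1"
    using Cauchy_Schwarz_ineq2[of I J] by (simp add: norm_sphere I J)
  then have ct: "inner I J * t \<le> \<bar>t\<bar>"
    by (metis abs_ge_self abs_mult mult_left_le_one_le abs_ge_zero order_trans)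
  have "(norm (rep_formula I J u v))^2
        = (norm (sl I P))^2 + (norm (qmul J (sl I Q)))^2 + 2 * inner (sl I P) (qmul J (sl I Q))"
    unfolding rep_formula_def P_def[symmetric] Q_def[symmetric]
    by (simp add: power2_norm_eq_inner inner_add_left inner_add_right inner_commute)
  also have "\<dots> = (cmod P)^2 + (cmod Q)^2 + 2 * inner I J * t"
    by (simp add: inner_sl_qmul_sl[OF I J] norm_qmul norm_sphere[OF J] norm_sl[OF I] t_def)
  also have "\<dots> < 1"
  proof -
    have "(cmod u)^2 < 1" "(cmod v)^2 < 1" using u v by (simp_all add: power_less_one_iff)
    then show ?thesis using ct hu hv by (cases "t \<ge> 0") auto
  qed
  finally show ?thesis by (simp add: power_less_one_iff)
qed

section \<open>Regular power series with coefficients in \<open>C_I\<close>\<close>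

definition slice_series :: "quat \<Rightarrow> complex fps \<Rightarrow> quat \<Rightarrow> quat" where
  "slice_series I F q = (\<Sum>k. qmul (qpow q k) (sl I (fps_nth F k)))"

lemma radius_lt:
  assumes F: "1 \<le> fps_conv_radius F" and z: "cmod z < 1"
  shows "ereal (cmod z) < fps_conv_radius F"
  using order_less_le_trans[OF _ F, of "ereal (cmod z)"] z by simp

(* On the slice C_J the series converges to the representation formula of the values of F
   at z and cnj z: each term q^k a_k is rep_formula I J (F_k z^k) (F_k (cnj z)^k). *)
lemma slice_series_sums_sl:
  assumes I: "I \<in> qsphere" and J: "J \<in> qsphere" and F: "1 \<le> fps_conv_radius F" and z: "cmod z < 1"
  shows "(\<lambda>k. qmul (qpow (sl J z) k) (sl I (fps_nth F k))) sums
           rep_formula I J (eval_fps F z) (eval_fps F (cnj z))"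
proof -
  have "qmul (qpow (sl J z) k) (sl I (fps_nth F k)) =
        rep_formula I J (fps_nth F k * z ^ k) (fps_nth F k * cnj z ^ k)" for k
    by (simp add: sl_pow[OF J] sl_mult_rep_formula[OF I J] mult.commute)
  moreover have "ereal (norm (cnj z)) < fps_conv_radius F"
    using radius_lt[OF F z] by simp
  ultimately show ?thesis
    by (simp only:) (intro rep_formula_sums sums_eval_fps radius_lt[OF F z])
qed

lemma slice_series_sl:
  assumes I: "I \<in> qsphere" and J: "J \<in> qsphere" and F: "1 \<le> fps_conv_radius F" and z: "cmod z < 1"
  shows "slice_series I F (sl J z) = rep_formula I J (eval_fps F z) (eval_fps F (cnj z))"
  unfolding slice_series_def using slice_series_sums_sl[OF assms] by (rule sums_unique[symmetric])

lemma slice_series_sums: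
  assumes I: "I \<in> qsphere" and F: "1 \<le> fps_conv_radius F" and q: "q \<in> qball"
  shows "(\<lambda>k. qmul (qpow q k) (sl I (fps_nth F k))) sums slice_series I F q"
proof -
  obtain J z where J: "J \<in> qsphere" and z: "cmod z < 1" and qz: "q = sl J z"
    using qball_in_slice[OF I q] .
  show ?thesis
    using slice_series_sums_sl[OF I J F z] slice_series_sl[OF I J F z] qz by simp
qed

lemma slice_series_same:
  assumes I: "I \<in> qsphere" and F: "1 \<le> fps_conv_radius F" and z: "cmod z < 1"
  shows "slice_series I F (sl I z) = sl I (eval_fps F z)"
  using slice_series_sl[OF I I F z] by (simp add: rep_formula_same[OF I])

lemma slice_series_ball:
  assumes I: "I \<in> qsphere" and F: "1 \<le> fps_conv_radius F" and q: "q \<in> qball"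
    and F_disc: "\<And>w. cmod w < 1 \<Longrightarrow> cmod (eval_fps F w) < 1"
  shows "slice_series I F q \<in> qball"
proof -
  obtain J z where J: "J \<in> qsphere" and z: "cmod z < 1" and qz: "q = sl J z"
    using qball_in_slice[OF I q] .
  have "cmod (cnj z) < 1" using z by simp
  then show ?thesis
    using norm_rep_formula[OF I J F_disc[OF z] F_disc] slice_series_sl[OF I J F z] qz
    by (simp add: qball_def)
qed

lemma slice_series_regext:
  assumes I: "I \<in> qsphere" and F: "1 \<le> fps_conv_radius F" and q: "q \<in> qball"
    and G: "\<And>w. cmod w < 1 \<Longrightarrow> G (sl I w) = sl I (eval_fps F w)"
  shows "slice_series I F q = regext I G q"
proof -
  have z: "cmod (slice_point q) < 1"
    using q slice_decomposition(3)[OF I] by (simp add: qball_def)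
  have "slice_series I F q = slice_series I F (sl (slice_unit I q) (slice_point q))"
    using arg_cong[OF slice_decomposition(2)[OF I, of q], of "slice_series I F"] .
  also have "\<dots> = rep_formula I (slice_unit I q) (eval_fps F (slice_point q))
                      (eval_fps F (cnj (slice_point q)))"
    by (rule slice_series_sl[OF I slice_decomposition(1)[OF I] F z])
  also have "\<dots> = regext I G q"
    using regext_rep_formula[OF I q, of G "eval_fps F"] G by simp
  finally show ?thesis .
qed

lemma powser_unique_real:
  fixes e :: "nat \<Rightarrow> real"
  assumes h: "\<And>x. \<bar>x\<bar> < 1 \<Longrightarrow> (\<lambda>k. e k * x ^ k) sums 0"
  shows "e m = 0"
proof (rule ccontr)
  assume em: "e m \<noteq> 0"
  have "e 0 = 0" using h[of 0] by simp
  with em have m: "m > 0" by (cases m) auto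
  have "\<exists>s. 0 < s \<and> (\<forall>z. z \<in> cball (0::real) s - {0} \<longrightarrow> (\<lambda>_. 0::real) z \<noteq> 0)"
    by (rule powser_0_nonzero[of 1 0 e "\<lambda>_. 0" m]) (use h em m in auto)
  then obtain s where s: "0 < s" and hs: "\<forall>z. z \<in> cball (0::real) s - {0} \<longrightarrow> (0::real) \<noteq> 0"
    by auto
  have "s \<in> cball (0::real) s - {0}" using s by auto
  then show False using hs by blast
qed

lemma qcoeff_unique:
  assumes ha: "\<And>x. \<bar>x\<bar> < 1 \<Longrightarrow> (\<lambda>k. qmul (qpow (qreal x) k) (a k)) sums s x"
    and hb: "\<And>x. \<bar>x\<bar> < 1 \<Longrightarrow> (\<lambda>k. qmul (qpow (qreal x) k) (b k)) sums s x"
  shows "a = b"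
proof
  fix m
  have hd: "(\<lambda>k. x ^ k *\<^sub>R (a k - b k)) sums 0" if x: "\<bar>x\<bar> < 1" for x
    using sums_diff[OF ha[OF x] hb[OF x]]
    by (simp add: qpow_qreal qmul_qreal_left scaleR_diff_right)
  have "a m - b m = 0"
  proof (rule quat_eq_by_functionals)
    fix l :: "quat \<Rightarrow> real" assume bl: "bounded_linear l"
    have "(\<lambda>k. l (a k - b k) * x ^ k) sums 0" if x: "\<bar>x\<bar> < 1" for x
      using bounded_linear.sums[OF bl hd[OF x]]
      by (simp add: linear_simps[OF bl] mult.commute)
    then have "l (a m - b m) = 0" by (rule powser_unique_real)
    then show "l (a m - b m) = l 0" by (simp add: linear_simps[OF bl])
  qed
  then show "a m = b m" by simp
qed

lemma qcoeffs_slice_series: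
  assumes I: "I \<in> qsphere" and F: "1 \<le> fps_conv_radius F"
    and g: "\<And>q. q \<in> qball \<Longrightarrow> g q = slice_series I F q"
  shows "qcoeffs g = (\<lambda>k. sl I (fps_nth F k))"
proof -
  define P where "P a \<longleftrightarrow> (\<forall>q\<in>qball. (\<lambda>n. qmul (qpow q n) (a n)) sums g q)" for a
  have P1: "P (\<lambda>k. sl I (fps_nth F k))"
    unfolding P_def using slice_series_sums[OF I F] g by simp
  have P2: "P (qcoeffs g)"
    unfolding qcoeffs_def P_def[symmetric] by (rule someI[of P, OF P1])
  have real: "qreal x \<in> qball" if "\<bar>x\<bar> < 1" for x
    using that by (simp add: qball_def qreal_def norm_Pair)
  show ?thesis
  proof (rule qcoeff_unique[where s = "\<lambda>x. g (qreal x)"])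
    fix x :: real assume "\<bar>x\<bar> < 1"
    then show "(\<lambda>k. qmul (qpow (qreal x) k) (qcoeffs g k)) sums g (qreal x)"
      and "(\<lambda>k. qmul (qpow (qreal x) k) (sl I (fps_nth F k))) sums g (qreal x)"
      using P1 P2 real unfolding P_def by blast+
  qed
qed

(* C_I-coefficients multiply like complex ones, so *-powers correspond to powers of F. *)
lemma star_pow_coeffs_sl:
  assumes I: "I \<in> qsphere"
  shows "star_pow_coeffs (\<lambda>k. sl I (fps_nth F k)) n = (\<lambda>k. sl I (fps_nth (F ^ n) k))"
proof (induction n)
  case 0
  then show ?case by (auto simp: fun_eq_iff qone_def)
next
  case (Suc n)
  show ?case
    by (simp add: Suc fun_eq_iff star_coeffs_def fps_mult_nth sl_mult[OF I] sl_sum atLeast0AtMost)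
qed

lemma star_pow_slice_series:
  assumes I: "I \<in> qsphere" and F: "1 \<le> fps_conv_radius F"
    and g: "\<And>q. q \<in> qball \<Longrightarrow> g q = slice_series I F q"
  shows "star_pow g n q = slice_series I (F ^ n) q"
proof -
  have "qcoeffs g = (\<lambda>k. sl I (fps_nth F k))" by (rule qcoeffs_slice_series[OF I F g])
  then show ?thesis
    unfolding star_pow_def pseries_def slice_series_def by (simp add: star_pow_coeffs_sl[OF I])
qed

definition complex_of_pair :: "real \<times> real \<Rightarrow> complex" where
  "complex_of_pair p = Complex (fst p) (snd p)"

lemma bounded_linear_complex_of_pair: "bounded_linear complex_of_pair"
proof -
  have "linear complex_of_pair"
    by (rule linearI) (simp_all add: complex_of_pair_def complex_eq_iff)
  then show ?thesis using linear_conv_bounded_linear by blast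
qed

lemma slice_domain_eq:
  "J \<in> qsphere \<Longrightarrow> {(x, y). slice x y J \<in> qball} = complex_of_pair -` ball 0 1"
  by (auto simp: slice_sl complex_of_pair_def ball_sl_iff)

lemma open_slice_domain: "open (complex_of_pair -` ball 0 1)"
  by (rule continuous_open_vimage[OF open_ball])
     (simp add: linear_continuous_at[OF bounded_linear_complex_of_pair])

(* The derivative of a C_I-series along the slice C_J, in the real coordinates (x, y) of
   x + y J: differentiate the representation formula of slice_series_sl. *)
definition slice_series_deriv :: "quat \<Rightarrow> quat \<Rightarrow> complex fps \<Rightarrow> real \<times> real \<Rightarrow> real \<times> real \<Rightarrow> quat"
  where "slice_series_deriv I J F p d =
    rep_formula I J (eval_fps (fps_deriv F) (complex_of_pair p) * complex_of_pair d)
      (eval_fps (fps_deriv F) (cnj (complex_of_pair p)) * cnj (complex_of_pair d))"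

lemma slice_series_has_derivative:
  assumes I: "I \<in> qsphere" and J: "J \<in> qsphere" and F: "1 \<le> fps_conv_radius F"
    and p: "p \<in> complex_of_pair -` ball 0 1"
  shows "((\<lambda>(x, y). slice_series I F (slice x y J)) has_derivative slice_series_deriv I J F p) (at p)"
proof -
  let ?C = complex_of_pair and ?H' = "eval_fps (fps_deriv F)"
  have HD: "(eval_fps F has_derivative (\<lambda>x. ?H' w * x)) (at w)" if w: "cmod w < 1" for w
    using has_field_derivative_eval_fps[OF radius_lt[OF F w], of UNIV]
    by (simp add: has_field_derivative_def)
  have bl_cnj: "bounded_linear (\<lambda>p. cnj (?C p))"
    by (rule bounded_linear_compose[OF bounded_linear_cnj bounded_linear_complex_of_pair])
  have p1: "cmod (?C p) < 1" and p2: "cmod (cnj (?C p)) < 1" using p by auto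
  have "((\<lambda>p. eval_fps F (?C p)) has_derivative (\<lambda>d. ?H' (?C p) * ?C d)) (at p)"
    "((\<lambda>p. eval_fps F (cnj (?C p))) has_derivative (\<lambda>d. ?H' (cnj (?C p)) * cnj (?C d))) (at p)"
    by (rule has_derivative_compose[OF bounded_linear_imp_has_derivative[OF bounded_linear_complex_of_pair] HD[OF p1]],
        rule has_derivative_compose[OF bounded_linear_imp_has_derivative[OF bl_cnj] HD[OF p2]])
  from has_derivative_compose[OF has_derivative_Pair[OF this]
      bounded_linear_imp_has_derivative[OF bounded_linear_rep_formula[of I J]]]
  have "((\<lambda>p. rep_formula I J (eval_fps F (?C p)) (eval_fps F (cnj (?C p))))
          has_derivative slice_series_deriv I J F p) (at p)"
    by (simp add: slice_series_deriv_def[abs_def])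
  then show ?thesis
  proof (rule has_derivative_transform_within_open[OF _ open_slice_domain p])
    fix p' assume "p' \<in> ?C -` ball 0 1"
    then show "rep_formula I J (eval_fps F (?C p')) (eval_fps F (cnj (?C p'))) =
               (\<lambda>(x, y). slice_series I F (slice x y J)) p'"
      using slice_series_sl[OF I J F, of "?C p'"] by (cases p') (simp add: slice_sl complex_of_pair_def)
  qed
qed

(* Every C_I-series of radius at least 1 is slice regular on the ball: its derivative along
   C_J is continuous and satisfies the Cauchy-Riemann identity rep_formula_CR. *)
lemma slice_regular_slice_series:
  assumes I: "I \<in> qsphere" and F: "1 \<le> fps_conv_radius F"
  shows "slice_regular qball (slice_series I F)"
  unfolding slice_regular_def
proof
  fix J assume J: "J \<in> qsphere"
  let ?C = complex_of_pair
  let ?O = "{(x, y). slice x y J \<in> qball}"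
  let ?D = "slice_series_deriv I J F"
  have F': "1 \<le> fps_conv_radius (fps_deriv F)"
    by (rule order_trans[OF F fps_conv_radius_deriv])
  have cont: "continuous_on ?O (\<lambda>p. ?D p d)" for d
  proof -
    have "continuous_on (?C -` ball 0 1) (\<lambda>p. (eval_fps (fps_deriv F) (?C p) * ?C d,
            eval_fps (fps_deriv F) (cnj (?C p)) * cnj (?C d)))"
      by (intro continuous_intros linear_continuous_on bounded_linear_complex_of_pair
          bounded_linear_compose[OF bounded_linear_cnj bounded_linear_complex_of_pair])
         (auto intro: order_less_le_trans[OF _ F'] simp: order_less_le_trans[OF _ F'])
    from continuous_on_compose2[OF linear_continuous_on[OF bounded_linear_rep_formula[of I J], of UNIV] this]
    show ?thesis unfolding slice_domain_eq[OF J] slice_series_deriv_def by simp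
  qed
  have "?C (1, 0) = 1" "?C (0, 1) = \<i>" by (simp_all add: complex_of_pair_def complex_eq_iff)
  then have CR: "?D p (1, 0) + qmul J (?D p (0, 1)) = 0" for p
    using rep_formula_CR[OF J] by (simp add: slice_series_deriv_def)
  show "\<exists>D. (\<forall>p\<in>?O. ((\<lambda>(x, y). slice_series I F (slice x y J)) has_derivative D p) (at p)) \<and>
          continuous_on ?O (\<lambda>p. D p (1, 0)) \<and> continuous_on ?O (\<lambda>p. D p (0, 1)) \<and>
          (\<forall>p\<in>?O. D p (1, 0) + qmul J (D p (0, 1)) = 0)"
    using slice_series_has_derivative[OF I J F] slice_domain_eq[OF J] cont CR by (intro exI[of _ ?D]) auto
qed

lemma slice_regular_cong:
  assumes reg: "slice_regular qball g" and eq: "\<And>q. q \<in> qball \<Longrightarrow> g q = g' q"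
  shows "slice_regular qball g'"
  unfolding slice_regular_def
proof
  fix J assume J: "J \<in> qsphere"
  let ?O = "{(x, y). slice x y J \<in> qball}"
  obtain D where der: "\<forall>p\<in>?O. ((\<lambda>(x, y). g (slice x y J)) has_derivative D p) (at p)"
    and rest: "continuous_on ?O (\<lambda>p. D p (1, 0))" "continuous_on ?O (\<lambda>p. D p (0, 1))"
      "\<forall>p\<in>?O. D p (1, 0) + qmul J (D p (0, 1)) = 0"
    using reg J unfolding slice_regular_def by blast
  have op: "open ?O" using slice_domain_eq[OF J] open_slice_domain by simp
  have "((\<lambda>(x, y). g' (slice x y J)) has_derivative D p) (at p)" if p: "p \<in> ?O" for p
  proof (rule has_derivative_transform_within_open[OF _ op p])
    show "((\<lambda>(x, y). g (slice x y J)) has_derivative D p) (at p)" using der p by blast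
    fix p' assume "p' \<in> ?O"
    then show "(\<lambda>(x, y). g (slice x y J)) p' = (\<lambda>(x, y). g' (slice x y J)) p'"
      using eq by (cases p') auto
  qed
  then show "\<exists>D. (\<forall>p\<in>?O. ((\<lambda>(x, y). g' (slice x y J)) has_derivative D p) (at p)) \<and>
          continuous_on ?O (\<lambda>p. D p (1, 0)) \<and> continuous_on ?O (\<lambda>p. D p (0, 1)) \<and>
          (\<forall>p\<in>?O. D p (1, 0) + qmul J (D p (0, 1)) = 0)"
    using rest by blast
qed

section \<open>The identity principle\<close>

(* A real functional l on H gives the complex functional  q |-> l q - i l (J q),  which turns
   maps into C_J-linear ones; it is how C-valued holomorphic functions are extracted from a
   slice regular function on C_J. *)
definition slice_functional :: "quat \<Rightarrow> (quat \<Rightarrow> real) \<Rightarrow> quat \<Rightarrow> complex" where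
  "slice_functional J l q = complex_of_real (l q) - \<i> * complex_of_real (l (qmul J q))"

lemma bounded_linear_slice_functional:
  assumes bl: "bounded_linear l"
  shows "bounded_linear (slice_functional J l)"
proof -
  have "linear (slice_functional J l)"
    by (rule linearI)
       (simp_all add: slice_functional_def qmul_add_right qmul_scaleR_right linear_simps[OF bl]
         algebra_simps scaleR_conv_of_real)
  then show ?thesis using linear_conv_bounded_linear by blast
qed

lemma slice_functional_CR:
  assumes J: "J \<in> qsphere" and bl: "bounded_linear l" and lin: "linear L"
    and CR: "L (1, 0) + qmul J (L (0, 1)) = 0"
  shows "slice_functional J l (L (Re w, Im w)) = slice_functional J l (L (1, 0)) * w"
proof -
  let ?K = "slice_functional J l"
  have "L (1, 0) = - qmul J (L (0, 1))" using CR by (simp add: eq_neg_iff_add_eq_0)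
  then have K01: "?K (L (0, 1)) = \<i> * ?K (L (1, 0))"
    by (simp add: slice_functional_def qmul_minus_right qsphere_sq2[OF J] linear_simps[OF bl]
        algebra_simps)
  have "(Re w, Im w) = Re w *\<^sub>R (1, 0) + Im w *\<^sub>R (0, 1)" by simp
  then have "L (Re w, Im w) = Re w *\<^sub>R L (1, 0) + Im w *\<^sub>R L (0, 1)"
    by (simp only: linear_add[OF lin] linear_scale[OF lin])
  then have "?K (L (Re w, Im w)) = Re w *\<^sub>R ?K (L (1, 0)) + Im w *\<^sub>R ?K (L (0, 1))"
    by (simp add: linear_simps[OF bounded_linear_slice_functional[OF bl]])
  also have "\<dots> = ?K (L (1, 0)) * w"
    by (simp add: K01 scaleR_conv_of_real complex_eq_iff algebra_simps)
  finally show ?thesis .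
qed

(* Hence for slice regular f the function z |-> slice_functional J l (f (z_J)) is holomorphic:
   its real differential is slice_functional J l composed with the C-R differential of f. *)
lemma slice_functional_holomorphic:
  fixes l :: "quat \<Rightarrow> real"
  assumes J: "J \<in> qsphere" and reg: "slice_regular qball f" and bl: "bounded_linear l"
  shows "(\<lambda>z. slice_functional J l (f (sl J z))) holomorphic_on ball 0 1"
  unfolding holomorphic_on_open[OF open_ball]
proof
  let ?O = "{(x, y). slice x y J \<in> qball}"
  let ?K = "slice_functional J l"
  obtain D where der: "\<forall>p\<in>?O. ((\<lambda>(x, y). f (slice x y J)) has_derivative D p) (at p)"
    and CR: "\<forall>p\<in>?O. D p (1, 0) + qmul J (D p (0, 1)) = 0"
    using reg J unfolding slice_regular_def by blast
  fix z :: complex assume z: "z \<in> ball 0 1"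
  define p where "p = (Re z, Im z)"
  have pO: "p \<in> ?O"
    using z by (simp add: p_def slice_sl ball_sl_iff[OF J])
  have dG: "((\<lambda>(x, y). f (slice x y J)) has_derivative D p) (at p)" using der pO by blast
  have lin: "linear (D p)" using has_derivative_bounded_linear[OF dG] bounded_linear.linear by blast
  have "linear (\<lambda>w::complex. (Re w, Im w))" by (rule linearI) simp_all
  then have blT: "bounded_linear (\<lambda>w::complex. (Re w, Im w))"
    using linear_conv_bounded_linear by blast
  have "((\<lambda>w. ?K ((\<lambda>(x, y). f (slice x y J)) (Re w, Im w))) has_derivative
          (\<lambda>w. ?K (D p (Re w, Im w)))) (at z)"
    by (rule has_derivative_compose[OF has_derivative_compose[OF bounded_linear_imp_has_derivative[OF blT]]
          bounded_linear_imp_has_derivative[OF bounded_linear_slice_functional[OF bl]]])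
       (use dG in \<open>simp add: p_def\<close>)
  moreover have "(\<lambda>w. ?K ((\<lambda>(x, y). f (slice x y J)) (Re w, Im w))) = (\<lambda>z. ?K (f (sl J z)))"
    by (simp add: fun_eq_iff sl_def)
  moreover have "?K (D p (Re w, Im w)) = ?K (D p (1, 0)) * w" for w
    using slice_functional_CR[OF J bl lin] CR pO by blast
  ultimately have "((\<lambda>z. ?K (f (sl J z))) has_derivative (*) (?K (D p (1, 0)))) (at z)"
    by simp
  then show "\<exists>f'. ((\<lambda>z. ?K (f (sl J z))) has_field_derivative f') (at z)"
    unfolding has_field_derivative_def by blast
qed

lemma islimpt_real_diameter: "(0::complex) islimpt (complex_of_real ` {-1<..<1})"
  unfolding islimpt_approachable
proof (intro allI impI)
  fix e :: real assume e: "e > 0"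
  define t where "t = min (e/2) (1/2)"
  have t: "t > 0" "t < 1" "t < e" using e by (auto simp: t_def)
  show "\<exists>x'\<in>complex_of_real ` {-1<..<1}. x' \<noteq> 0 \<and> dist x' 0 < e"
    using t by (intro bexI[of _ "complex_of_real t"]) auto
qed

(* On each slice C_J, apply analytic continuation to the holomorphic
   functions of slice_functional_holomorphic for every real functional l. *)
lemma slice_regular_identity:
  assumes rf: "slice_regular qball f" and rg: "slice_regular qball g"
    and re: "\<And>x. \<bar>x\<bar> < 1 \<Longrightarrow> f (qreal x) = g (qreal x)" and q: "q \<in> qball"
  shows "f q = g q"
proof -
  have "(\<i>, 0) \<in> qsphere" by (simp add: qsphere_iff)
  then obtain J z where J: "J \<in> qsphere" and z: "cmod z < 1" and qz: "q = sl J z"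
    using qball_in_slice[OF _ q] by blast
  have "f (sl J z) = g (sl J z)"
  proof (rule quat_eq_by_functionals)
    fix l :: "quat \<Rightarrow> real" assume bl: "bounded_linear l"
    define d where "d z = slice_functional J l (f (sl J z)) - slice_functional J l (g (sl J z))" for z
    have hol: "d holomorphic_on ball 0 1"
      unfolding d_def
      by (intro holomorphic_on_diff slice_functional_holomorphic[OF J rf bl]
          slice_functional_holomorphic[OF J rg bl])
    have "d z = 0"
    proof (rule analytic_continuation[OF hol open_ball connected_ball _ _ islimpt_real_diameter])
      show "complex_of_real ` {-1<..<1} \<subseteq> ball 0 1" "(0::complex) \<in> ball 0 1" "z \<in> ball 0 1"
        using z by auto
      fix w assume "w \<in> complex_of_real ` {-1<..<1}"
      then obtain x where "w = complex_of_real x" "\<bar>x\<bar> < 1" by auto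
      then show "d w = 0" using re by (simp add: d_def)
    qed
    then have "Re (d z) = 0" by simp
    then show "l (f (sl J z)) = l (g (sl J z))" by (simp add: d_def slice_functional_def)
  qed
  then show ?thesis using qz by simp
qed

definition taylor_fps :: "(complex \<Rightarrow> complex) \<Rightarrow> complex fps" where
  "taylor_fps g = Abs_fps (\<lambda>n. (deriv ^^ n) g 0 / fact n)"

lemma taylor_fps:
  assumes hol: "g holomorphic_on ball 0 1"
  shows "1 \<le> fps_conv_radius (taylor_fps g)" "\<And>z. cmod z < 1 \<Longrightarrow> eval_fps (taylor_fps g) z = g z"
proof -
  have s: "(\<lambda>n. fps_nth (taylor_fps g) n * w ^ n) sums g w" if w: "cmod w < 1" for w
    using holomorphic_power_series[OF hol, of w] w by (simp add: taylor_fps_def)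
  show "1 \<le> fps_conv_radius (taylor_fps g)"
    unfolding fps_conv_radius_def
  proof (rule conv_radius_geI_ex')
    fix r :: real assume r: "0 < r" "ereal r < 1"
    then show "summable (\<lambda>n. fps_nth (taylor_fps g) n * complex_of_real r ^ n)"
      using s[of "complex_of_real r"] by (auto simp: sums_iff)
  qed
  fix z :: complex assume z: "cmod z < 1"
  show "eval_fps (taylor_fps g) z = g z" unfolding eval_fps_def using s[OF z] by (simp add: sums_iff)
qed

section \<open>Regular composition of \<open>C_I\<close>-series\<close>

(* On C_J the k-th term is rep_formula of a_k b(z)^k and a_k b(cnj z)^k. *)
lemma reg_comp_slice_series:
  assumes I: "I \<in> qsphere"
    and a: "a holomorphic_on ball 0 1" and b: "b holomorphic_on ball 0 1"
    and b_disc: "\<And>w. cmod w < 1 \<Longrightarrow> cmod (b w) < 1"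
    and f: "\<And>q. q \<in> qball \<Longrightarrow> f q = slice_series I (taylor_fps a) q"
    and g: "\<And>q. q \<in> qball \<Longrightarrow> g q = slice_series I (taylor_fps b) q"
    and q: "q \<in> qball"
  shows "(\<lambda>k. qmul (star_pow g k q) (qcoeffs f k)) sums slice_series I (taylor_fps (a \<circ> b)) q"
proof -
  define A where "A = taylor_fps a"
  define B where "B = taylor_fps b"
  have ab: "(a \<circ> b) holomorphic_on ball 0 1"
    by (rule holomorphic_on_compose_gen[OF b a]) (use b_disc in auto)
  note A = taylor_fps[OF a, folded A_def] and B = taylor_fps[OF b, folded B_def]
    and AB = taylor_fps[OF ab]
  obtain J z where J: "J \<in> qsphere" and z: "cmod z < 1" and qz: "q = sl J z"
    using qball_in_slice[OF I q] .
  have z': "cmod (cnj z) < 1" using z by simp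
  have coeffs: "qcoeffs f = (\<lambda>k. sl I (fps_nth A k))"
    using qcoeffs_slice_series[OF I A(1)] f by (simp add: A_def)
  have Bpow: "eval_fps (B ^ k) w = b w ^ k" if "cmod w < 1" for k w
    using eval_fps_power[OF radius_lt[OF B(1) that]] B(2)[OF that] by simp
  have each_term: "qmul (star_pow g k q) (qcoeffs f k) =
     rep_formula I J (fps_nth A k * b z ^ k) (fps_nth A k * b (cnj z) ^ k)" for k
  proof -
    have "star_pow g k q = slice_series I (B ^ k) (sl J z)"
      using star_pow_slice_series[OF I B(1)] g qz by (simp add: B_def)
    also have "\<dots> = rep_formula I J (b z ^ k) (b (cnj z) ^ k)"
      using slice_series_sl[OF I J order_trans[OF B(1) fps_conv_radius_power] z] Bpow z z' by simp
    finally show ?thesis by (simp add: coeffs rep_formula_mult_sl[OF I] mult.commute)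
  qed
  have "(\<lambda>k. fps_nth A k * b w ^ k) sums a (b w)" if "cmod w < 1" for w
    using sums_eval_fps[OF radius_lt[OF A(1) b_disc[OF that]]] A(2)[OF b_disc[OF that]] by simp
  then have "(\<lambda>k. rep_formula I J (fps_nth A k * b z ^ k) (fps_nth A k * b (cnj z) ^ k)) sums
        rep_formula I J (a (b z)) (a (b (cnj z)))"
    using z z' by (intro rep_formula_sums)
  also have "rep_formula I J (a (b z)) (a (b (cnj z))) = slice_series I (taylor_fps (a \<circ> b)) q"
    using slice_series_sl[OF I J AB(1) z] AB(2)[OF z] AB(2)[OF z'] qz by simp
  finally show ?thesis unfolding each_term .
qed

lemma slice_restriction_holomorphic:
  assumes reg: "slice_regular qball f" and I: "I \<in> qsphere"
    and slice_pres: "f ` qballI I \<subseteq> qballI I"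
  obtains h where "h holomorphic_on ball 0 1" "\<And>w. cmod w < 1 \<Longrightarrow> cmod (h w) < 1"
    "\<And>w. cmod w < 1 \<Longrightarrow> f (sl I w) = sl I (h w)"
proof
  define h where "h w = slice_coord I (f (sl I w))" for w
  show on_slice: "f (sl I w) = sl I (h w)" and "cmod (h w) < 1" if w: "cmod w < 1" for w
  proof -
    have "sl I w \<in> qballI I" using w ball_sl_iff[OF I] by (auto simp: qballI_def sl_def)
    then have "f (sl I w) \<in> qballI I" using slice_pres by blast
    then obtain x y where "f (sl I w) \<in> qball" "f (sl I w) = sl I (Complex x y)"
      unfolding qballI_def slice_sl by blast
    then show "f (sl I w) = sl I (h w)" "cmod (h w) < 1"
      by (simp_all add: h_def slice_coord_sl[OF I] ball_sl_iff[OF I])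
  qed
  have "bounded_linear qre"
    unfolding qre_def[abs_def] by (rule bounded_linear_compose[OF bounded_linear_Re bounded_linear_fst])
  from slice_functional_holomorphic[OF I reg this]
  show "h holomorphic_on ball 0 1"
    by (rule holomorphic_transform) (simp add: h_def slice_coord_def slice_functional_def complex_eq_iff)
qed

lemma funpow_holomorphic_self_map:
  assumes hol: "h holomorphic_on ball 0 1" and disc: "\<And>w. cmod w < 1 \<Longrightarrow> cmod (h w) < 1"
  shows "(h ^^ n) holomorphic_on ball 0 1 \<and> (\<forall>w. cmod w < 1 \<longrightarrow> cmod ((h ^^ n) w) < 1)"
proof (induction n)
  case 0
  then show ?case by simp
next
  case (Suc n)
  have "(h \<circ> (h ^^ n)) holomorphic_on ball 0 1"
    by (rule holomorphic_on_compose_gen[OF conjunct1[OF Suc] hol]) (use Suc in auto)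
  then show ?case using Suc disc by (simp add: o_def)
qed

lemma funpow_on_slice:
  assumes disc: "\<And>w. cmod w < 1 \<Longrightarrow> cmod (h w) < 1"
    and on_slice: "\<And>w. cmod w < 1 \<Longrightarrow> f (sl I w) = sl I (h w)" and w: "cmod w < 1"
  shows "(f ^^ n) (sl I w) = sl I ((h ^^ n) w) \<and> cmod ((h ^^ n) w) < 1"
  by (induction n) (simp_all add: w disc on_slice)

(* By the identity principle f is the C_I-series of the Taylor expansion of h. *)
lemma slice_regular_taylor_series:
  assumes reg: "slice_regular qball f" and I: "I \<in> qsphere"
    and hol: "h holomorphic_on ball 0 1"
    and on_slice: "\<And>w. cmod w < 1 \<Longrightarrow> f (sl I w) = sl I (h w)" and q: "q \<in> qball"
  shows "f q = slice_series I (taylor_fps h) q"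
proof (rule slice_regular_identity[OF reg slice_regular_slice_series[OF I taylor_fps(1)[OF hol]] _ q])
  fix x :: real assume "\<bar>x\<bar> < 1"
  then have x: "cmod (complex_of_real x) < 1" by simp
  show "f (qreal x) = slice_series I (taylor_fps h) (qreal x)"
    using slice_series_same[OF I taylor_fps(1)[OF hol] x] taylor_fps(2)[OF hol x] on_slice[OF x]
    by simp
qed

lemma reg_iter_slice_series:
  assumes reg: "slice_regular qball f" and I: "I \<in> qsphere"
    and hol: "h holomorphic_on ball 0 1" and disc: "\<And>w. cmod w < 1 \<Longrightarrow> cmod (h w) < 1"
    and on_slice: "\<And>w. cmod w < 1 \<Longrightarrow> f (sl I w) = sl I (h w)"
    and n: "n \<ge> 1" and q: "q \<in> qball"
  shows "reg_iter f n q = slice_series I (taylor_fps (h ^^ n)) q"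
    and "(\<lambda>k. qmul (star_pow (reg_iter f n) k q) (qcoeffs f k))
           sums slice_series I (taylor_fps (h ^^ Suc n)) q"
proof -
  have iter_hol: "(h ^^ m) holomorphic_on ball 0 1"
    and iter_disc: "\<And>w. cmod w < 1 \<Longrightarrow> cmod ((h ^^ m) w) < 1" for m
    using funpow_holomorphic_self_map[of h m] hol disc by blast+
  have f_series: "\<And>q. q \<in> qball \<Longrightarrow> f q = slice_series I (taylor_fps h) q"
    by (rule slice_regular_taylor_series[OF reg I hol on_slice])
  have step: "(\<lambda>k. qmul (star_pow (reg_iter f m) k p) (qcoeffs f k))
                sums slice_series I (taylor_fps (h ^^ Suc m)) p"
    if m: "\<And>p. p \<in> qball \<Longrightarrow> reg_iter f m p = slice_series I (taylor_fps (h ^^ m)) p"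
      and p: "p \<in> qball" for m p
    using reg_comp_slice_series[OF I hol iter_hol _ f_series m p] iter_disc by simp
  have iterate: "reg_iter f (Suc m) p = slice_series I (taylor_fps (h ^^ Suc m)) p"
    if "p \<in> qball" for m p
    using that
  proof (induction m arbitrary: p)
    case 0
    then show ?case using f_series by simp
  next
    case (Suc m)
    then show ?case using step[OF Suc.IH] by (simp add: reg_comp_def sums_iff o_def)
  qed
  from n obtain m where m: "n = Suc m" by (cases n) auto
  have iterate_n: "reg_iter f n p = slice_series I (taylor_fps (h ^^ n)) p" if "p \<in> qball" for p
    unfolding m by (rule iterate[OF that])
  then show "reg_iter f n q = slice_series I (taylor_fps (h ^^ n)) q" using q .
  show "(\<lambda>k. qmul (star_pow (reg_iter f n) k q) (qcoeffs f k))
          sums slice_series I (taylor_fps (h ^^ Suc n)) q"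
    by (rule step[OF iterate_n q])
qed

theorem theorem5p2:
  fixes f :: "quat \<Rightarrow> quat" and I :: quat
  assumes reg: "slice_regular qball f"
    and self: "f ` qball \<subseteq> qball"
    and I: "I \<in> qsphere"
    and slice_pres: "f ` qballI I \<subseteq> qballI I"
  shows "\<forall>n\<ge>1.
           slice_regular qball (reg_iter f n) \<and>
           reg_iter f n ` qball \<subseteq> qball \<and>
           (\<forall>q\<in>qball. summable (\<lambda>k. qmul (star_pow (reg_iter f n) k q) (qcoeffs f k))) \<and>
           (\<forall>q\<in>qball. reg_iter f n q = regext I (f ^^ n) q)"
proof (intro allI impI)
  fix n :: nat assume n: "n \<ge> 1"
  obtain h where hol: "h holomorphic_on ball 0 1" and disc: "\<And>w. cmod w < 1 \<Longrightarrow> cmod (h w) < 1"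
    and on_slice: "\<And>w. cmod w < 1 \<Longrightarrow> f (sl I w) = sl I (h w)"
    using slice_restriction_holomorphic[OF reg I slice_pres] by blast
  have series: "reg_iter f n q = slice_series I (taylor_fps (h ^^ n)) q"
    "(\<lambda>k. qmul (star_pow (reg_iter f n) k q) (qcoeffs f k)) sums slice_series I (taylor_fps (h ^^ Suc n)) q"
    if "q \<in> qball" for q
    using reg_iter_slice_series[OF reg I hol _ _ n that] disc on_slice by blast+
  have hn: "(h ^^ n) holomorphic_on ball 0 1" "\<And>w. cmod w < 1 \<Longrightarrow> cmod ((h ^^ n) w) < 1"
    using funpow_holomorphic_self_map[of h n] hol disc by blast+
  note radius = taylor_fps(1)[OF hn(1)] and eval_taylor = taylor_fps(2)[OF hn(1)]
  have "slice_regular qball (reg_iter f n)"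
    using slice_regular_cong[OF slice_regular_slice_series[OF I radius]] series(1) by metis
  moreover have "reg_iter f n ` qball \<subseteq> qball"
    using slice_series_ball[OF I radius] hn eval_taylor series(1) by auto
  moreover have "summable (\<lambda>k. qmul (star_pow (reg_iter f n) k q) (qcoeffs f k))" if q: "q \<in> qball" for q
    using series(2)[OF q] by (rule sums_summable)
  moreover have "reg_iter f n q = regext I (f ^^ n) q" if q: "q \<in> qball" for q
  proof -
    have "(f ^^ n) (sl I w) = sl I (eval_fps (taylor_fps (h ^^ n)) w)" if "cmod w < 1" for w
      using funpow_on_slice[of h f I w n] disc on_slice that eval_taylor[OF that] by simp
    from slice_series_regext[OF I radius q, of "f ^^ n", OF this] show ?thesis
      by (simp add: series(1)[OF q])
  qed
  ultimately show "slice_regular qball (reg_iter f n) \<and> reg_iter f n ` qball \<subseteq> qball \<and>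
      (\<forall>q\<in>qball. summable (\<lambda>k. qmul (star_pow (reg_iter f n) k q) (qcoeffs f k))) \<and>
      (\<forall>q\<in>qball. reg_iter f n q = regext I (f ^^ n) q)"
    by blast
qed

end
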